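(* Let $X \subseteq \mathbb{Z}^n$ be a closed set, $c \in \mathbb{R}^n$, $Q$ an $n\times n$ symmetric positive semidefinite matrix, and $\Omega > 0$. Define $h:\mathbb{R}^n \times \mathbb{R}_+ \to \mathbb{R}\cup\{+\infty\}$ by $h(x,t) = \frac{x'Qx}{t}$ if $t>0$; $h(x,0) = 0$ if $x'Qx = 0$; and $h(x,0) = +\infty$ otherwise. Let $g(x,t) = c'x + \frac{\Omega}{2}h(x,t) + \frac{\Omega}{2}t$ and $f(t) = \min_{x \in X} g(x,t)$ for $t \ge 0$, and for each $t\ge 0$ let $x(t) \in X$ be a minimizer attaining $f(t)$. If $f$ has a local minimum at $\bar t > 0$, then $$c'x(\bar t) + \Omega\sqrt{x(\bar t)'Qx(\bar t)} = f(\bar t).$$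
   Context: $h$ is the closure of the perspective function of the convex quadratic $q(x)=x'Qx$. The minimum defining $f(t)$ is assumed to be attained, and $x(t)$ denotes a minimizer. *)

theory Defs
  imports "HOL-Analysis.Analysis"
begin

text \<open>Closure of the perspective function of q(x) = x'Qx, valued in the extended reals.\<close>
definition persp_h :: "real^'n^'n \<Rightarrow> real^'n \<Rightarrow> real \<Rightarrow> ereal" where
  "persp_h Q x t =
     (if t > 0 then ereal (x \<bullet> (Q *v x) / t)
      else if x \<bullet> (Q *v x) = 0 then 0 else \<infinity>)"

definition g_fun :: "real^'n \<Rightarrow> real^'n^'n \<Rightarrow> real \<Rightarrow> real^'n \<Rightarrow> real \<Rightarrow> ereal" where
  "g_fun c Q \<Omega> x t = ereal (c \<bullet> x) + ereal (\<Omega> / 2) * persp_h Q x t + ereal (\<Omega> / 2 * t)"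

text \<open>f(t) = min over X of g(x,t); written as an infimum, attainment is assumed separately.\<close>
definition f_fun :: "(real^'n) set \<Rightarrow> real^'n \<Rightarrow> real^'n^'n \<Rightarrow> real \<Rightarrow> real \<Rightarrow> ereal" where
  "f_fun X c Q \<Omega> t = (INF x\<in>X. g_fun c Q \<Omega> x t)"

end

theory Submission
  imports Defs
begin

text \<open>Fix the minimiser \<open>x\<^sub>0 = x(t\<^sub>0)\<close> at the local minimum \<open>t\<^sub>0\<close> and write
  \<open>q = x\<^sub>0'Qx\<^sub>0\<close>. For \<open>t > 0\<close> we have \<open>f(t) \<le> g(x\<^sub>0, t) = c'x\<^sub>0 + \<Omega>/2 (q/t + t)\<close>,
  with equality at \<open>t\<^sub>0\<close>, so this smooth function of \<open>t\<close> also has a local minimum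
  at \<open>t\<^sub>0\<close>. Fermat's rule gives \<open>1 - q/t\<^sub>0\<^sup>2 = 0\<close>, i.e. \<open>t\<^sub>0 = \<surd>q\<close>, and substituting
  yields \<open>f(t\<^sub>0) = c'x\<^sub>0 + \<Omega>\<surd>q\<close>.\<close>

lemma g_fun_pos:
  assumes "t > 0"
  shows "g_fun c Q \<Omega> x t = ereal (c \<bullet> x + \<Omega> / 2 * (x \<bullet> (Q *v x) / t) + \<Omega> / 2 * t)"
  using assms by (simp add: g_fun_def persp_h_def)

lemma local_min_inverse_plus_id:
  fixes a b q t d :: real
  assumes "b \<noteq> 0" "t > 0" "d > 0"
    and local_min: "\<forall>s. \<bar>t - s\<bar> < d \<longrightarrow> a + b * (q / t) + b * t \<le> a + b * (q / s) + b * s"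
  shows "t\<^sup>2 = q"
proof -
  have "((\<lambda>s. a + b * (q / s) + b * s) has_real_derivative b * (- q / t\<^sup>2) + b) (at t)"
    using \<open>t > 0\<close> by (auto intro!: derivative_eq_intros simp: power2_eq_square)
  then have "b * (- q / t\<^sup>2) + b = 0"
    using \<open>d > 0\<close> local_min by (rule DERIV_local_min)
  then show ?thesis
    using \<open>b \<noteq> 0\<close> \<open>t > 0\<close> by (simp add: field_simps)
qed

theorem proposition2:
  fixes X :: "(real^'n) set" and c :: "real^'n" and Q :: "real^'n^'n"
    and \<Omega> :: real and xm :: "real \<Rightarrow> real^'n" and tbar :: real
  assumes X_int: "X \<subseteq> {x. \<forall>i. x $ i \<in> \<int>}"
    and X_closed: "closed X"
    and Q_sym: "transpose Q = Q"
    and Q_psd: "\<forall>v. 0 \<le> v \<bullet> (Q *v v)"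
    and \<Omega>_pos: "\<Omega> > 0"
    and xm_in: "\<forall>t\<ge>0. xm t \<in> X"
    and xm_min: "\<forall>t\<ge>0. g_fun c Q \<Omega> (xm t) t = f_fun X c Q \<Omega> t"
    and tbar_pos: "tbar > 0"
    and loc_min: "\<exists>\<delta>>0. \<forall>t. t \<ge> 0 \<and> \<bar>t - tbar\<bar> < \<delta> \<longrightarrow>
                     f_fun X c Q \<Omega> tbar \<le> f_fun X c Q \<Omega> t"
  shows "ereal (c \<bullet> xm tbar + \<Omega> * sqrt (xm tbar \<bullet> (Q *v xm tbar))) = f_fun X c Q \<Omega> tbar"
proof -
  obtain \<delta> where "\<delta> > 0" and \<delta>_min: "\<forall>t. t \<ge> 0 \<and> \<bar>t - tbar\<bar> < \<delta> \<longrightarrow>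
      f_fun X c Q \<Omega> tbar \<le> f_fun X c Q \<Omega> t"
    using loc_min by blast
  define x0 where "x0 = xm tbar"
  define q where "q = x0 \<bullet> (Q *v x0)"
  define \<phi> where "\<phi> t = c \<bullet> x0 + \<Omega> / 2 * (q / t) + \<Omega> / 2 * t" for t
  have x0_in: "x0 \<in> X"
    using xm_in tbar_pos by (simp add: x0_def)
  have f_tbar: "f_fun X c Q \<Omega> tbar = ereal (\<phi> tbar)"
    using xm_min tbar_pos g_fun_pos[OF tbar_pos, of c Q \<Omega> x0]
    by (simp add: x0_def q_def \<phi>_def)
  have "\<phi> tbar \<le> \<phi> s" if "\<bar>tbar - s\<bar> < min \<delta> tbar" for s
  proof -
    have "s > 0" using that by linarith
    have "f_fun X c Q \<Omega> tbar \<le> f_fun X c Q \<Omega> s" using \<delta>_min \<open>s > 0\<close> that by (simp add: abs_minus_commute)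
    also have "\<dots> \<le> g_fun c Q \<Omega> x0 s" unfolding f_fun_def using x0_in by (rule INF_lower)
    also have "\<dots> = ereal (\<phi> s)" using g_fun_pos[OF \<open>s > 0\<close>] by (simp add: \<phi>_def q_def)
    finally show ?thesis using f_tbar by simp
  qed
  then have "tbar\<^sup>2 = q"
    using \<Omega>_pos tbar_pos \<open>\<delta> > 0\<close> unfolding \<phi>_def
    by (intro local_min_inverse_plus_id[of "\<Omega> / 2" _ "min \<delta> tbar" "c \<bullet> x0"]) auto
  then have "sqrt q = tbar" using tbar_pos by auto
  then show ?thesis
    using f_tbar tbar_pos \<open>tbar\<^sup>2 = q\<close> by (simp add: x0_def q_def \<phi>_def field_simps power2_eq_square)
qed

end
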